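(* For $0<\nu\le1$, the functions $p_*(\nu)$, $\nu h_*(\nu)$ and $\nu h(\mathrm e^{-1}\nu,\nu)$ are strictly increasing in $\nu$, while $h_*(\nu)$ and $h(\mathrm e^{-1}\nu,\nu)$ are strictly decreasing in $\nu$. Moreover, $$\nu h_*(\nu)\le\nu h(\mathrm e^{-1}\nu,\nu)\le(1-\nu+\mathrm e^{-1}\nu^2)^{-1}\le1+(\mathrm e-1)\nu\le\mathrm e.$$
   Context: For $0<\nu\le1$ and $0\le p<1$, let $\beta_p=1-\nu+p\nu$ and, for $p>0$, $h(p,\nu)=[\min\{\beta_p\ln\beta_p^{-1},\,p\ln p^{-1}\}]^{-1}$. Let $p_*(\nu)=\min\{p>0:\beta_p\ge\mathrm e^{-1}\text{ and }p\ln p=\beta_p\ln\beta_p\}$, which is the minimizer of $h(\cdot,\nu)$ over $0<p<1$, and $h_*(\nu)=h(p_*(\nu),\nu)=\min_{0<p<1}h(p,\nu)$. Here $\mathrm e$ is the base of the natural logarithm. *)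

theory Defs
  imports Complex_Main
begin

definition beta :: "real \<Rightarrow> real \<Rightarrow> real" where
  "beta p \<nu> = 1 - \<nu> + p * \<nu>"

definition h :: "real \<Rightarrow> real \<Rightarrow> real" where
  "h p \<nu> = inverse (min (beta p \<nu> * ln (inverse (beta p \<nu>))) (p * ln (inverse p)))"

definition p_star :: "real \<Rightarrow> real" where
  "p_star \<nu> = (LEAST p. p > 0 \<and> beta p \<nu> \<ge> exp (-1) \<and> p * ln p = beta p \<nu> * ln (beta p \<nu>))"

definition h_star :: "real \<Rightarrow> real" where
  "h_star \<nu> = h (p_star \<nu>) \<nu>"

end

(*
  With \<eta> x = -x ln x we have h p \<nu> = 1 / min (\<eta> \<beta>_p) (\<eta> p). The function \<eta> increases
  on (0, 1/e] and decreases on [1/e, 1), so p_* is where the increasing branch \<eta> p meets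
  the decreasing branch \<eta> \<beta>_p; it maximises the minimum, whence h_* = 1 / \<eta> p_*.
  Increasing \<nu> lowers \<beta>_p and pushes the crossing point, and with it \<eta> p_*, upwards.

  For \<nu> h write \<nu> / \<eta> (1 - t) = (\<nu> / t) (t / \<eta> (1 - t)) with t = (1 - p) \<nu>, where
  \<eta> (1 - t) / t decreases because its derivative is (t + ln (1 - t)) / t^2 < 0. Then
  \<nu> h_* \<nu> \<le> \<nu> h (p_* \<nu>') \<nu> < \<nu>' h (p_* \<nu>') \<nu>' = \<nu>' h_* \<nu>' for \<nu> < \<nu>'.

  With \<beta> = 1 - \<nu> + \<nu>^2/e, the bound \<nu> h (\<nu>/e) \<nu> \<le> 1/\<beta> amounts to ln \<beta> \<le> -\<nu> and
  \<beta> \<le> (1 - ln \<nu>) / e, both obtained from the sign of a derivative; the remaining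
  inequalities are polynomial.
*)
theory Submission
  imports Defs "HOL-Analysis.Complex_Transcendental" "HOL-Real_Asymp.Real_Asymp"
begin

lemma exp_one_gt_27: "27/10 < exp (1::real)"
  using e_approx_32 by (simp add: abs_if split: if_split_asm)

lemma exp_minus_one_bounds: "9/25 < exp (-1::real)" "exp (-1::real) < 1/2"
proof -
  have e: "exp (-1::real) = 1 / exp 1" by (simp add: exp_minus inverse_eq_divide)
  show "9/25 < exp (-1::real)"
    unfolding e using e_less_272 by (subst less_divide_eq) auto
  show "exp (-1::real) < 1/2"
    unfolding e using exp_one_gt_27 by (subst divide_less_eq) auto
qed

lemma exp_minus_one_mult_exp_one: "exp (-1) * exp 1 = (1::real)"
  by (simp flip: exp_add)

lemma exp_minus_one_mult_less_one:
  fixes \<nu> :: real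
  assumes "\<nu> \<le> 1"
  shows "exp (-1) * \<nu> < 1"
proof -
  have "exp (-1) * \<nu> \<le> exp (-1) * 1"
    using assms by (intro mult_left_mono) auto
  then show ?thesis
    using exp_minus_one_bounds by linarith
qed

definition \<eta> :: "real \<Rightarrow> real" where
  "\<eta> x = - (x * ln x)"

lemma h_eq: "h p \<nu> = inverse (min (\<eta> (beta p \<nu>)) (\<eta> p))"
  by (simp add: h_def \<eta>_def ln_inverse)

lemma eta_pos: "0 < x \<Longrightarrow> x < 1 \<Longrightarrow> 0 < \<eta> x"
  by (simp add: \<eta>_def mult_pos_neg)

lemma has_real_derivative_eta: "0 < x \<Longrightarrow> (\<eta> has_real_derivative - (ln x + 1)) (at x)"
  unfolding \<eta>_def by (auto intro!: derivative_eq_intros)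

lemma eta_strict_mono:
  assumes "0 < x" "x < y" "y \<le> exp (-1)"
  shows "\<eta> x < \<eta> y"
proof (rule DERIV_pos_imp_increasing_open[OF \<open>x < y\<close>])
  fix t assume t: "x < t" "t < y"
  then have "ln t < ln (exp (-1))"
    using assms by (subst ln_less_cancel_iff) auto
  then show "\<exists>d. (\<eta> has_real_derivative d) (at t) \<and> 0 < d"
    using t assms by (intro exI[of _ "- (ln t + 1)"] conjI has_real_derivative_eta) auto
next
  show "continuous_on {x..y} \<eta>"
    using assms unfolding \<eta>_def by (auto intro!: continuous_intros)
qed

lemma eta_strict_antimono:
  assumes "exp (-1) \<le> x" "x < y"
  shows "\<eta> y < \<eta> x"
proof -
  have "0 < x" using assms(1) exp_gt_zero[of "-1"] by linarith
  show ?thesis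
  proof (rule DERIV_neg_imp_decreasing_open[OF \<open>x < y\<close>])
    fix t assume t: "x < t" "t < y"
    then have "ln (exp (-1)) < ln t"
      using assms \<open>0 < x\<close> by (subst ln_less_cancel_iff) auto
    then show "\<exists>d. (\<eta> has_real_derivative d) (at t) \<and> d < 0"
      using t \<open>0 < x\<close> by (intro exI[of _ "- (ln t + 1)"] conjI has_real_derivative_eta) auto
  next
    show "continuous_on {x..y} \<eta>"
      using \<open>0 < x\<close> unfolding \<eta>_def by (auto intro!: continuous_intros)
  qed
qed

lemma eta_exp_minus_one [simp]: "\<eta> (exp (-1)) = exp (-1)"
  by (simp add: \<eta>_def)

lemma eta_le_exp_minus_one: "0 < x \<Longrightarrow> \<eta> x \<le> exp (-1)"
  using eta_strict_mono[of x "exp (-1)"] eta_strict_antimono[of "exp (-1)" x]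
  by (cases x "exp (-1::real)" rule: linorder_cases) auto

lemma continuous_on_eta: "continuous_on {0..} \<eta>"
proof -
  have "continuous (at x within {0..}) \<eta>" if "0 \<le> x" for x
  proof (cases "x = 0")
    case True
    have "(\<eta> \<longlongrightarrow> \<eta> 0) (at_right 0)"
      unfolding \<eta>_def by real_asymp
    then show ?thesis
      using True by (simp add: continuous_within at_within_Ici_at_right)
  next
    case False
    then show ?thesis
      using that has_real_derivative_eta[of x]
      by (auto intro: continuous_at_imp_continuous_at_within DERIV_isCont)
  qed
  then show ?thesis
    by (simp add: continuous_on_eq_continuous_within)
qed

lemma eta_exp_minus_one_mult: "0 < \<nu> \<Longrightarrow> \<eta> (exp (-1) * \<nu>) = exp (-1) * \<nu> * (1 - ln \<nu>)"
  by (simp add: \<eta>_def ln_mult algebra_simps)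

lemma eta_exp_minus_one_mult_pos:
  assumes "0 < \<nu>" "\<nu> \<le> 1"
  shows "0 < \<eta> (exp (-1) * \<nu>)"
proof -
  have "0 < 1 - ln \<nu>"
    using ln_le_minus_one[of \<nu>] assms by linarith
  then show ?thesis
    unfolding eta_exp_minus_one_mult[OF assms(1)] using assms(1) by (intro mult_pos_pos) auto
qed

lemma eta_one_minus_div_self_strict_antimono:
  assumes "0 < s" "s < t" "t < 1"
  shows "\<eta> (1 - t) / t < \<eta> (1 - s) / s"
proof (rule DERIV_neg_imp_decreasing[OF \<open>s < t\<close>])
  fix x assume x: "s \<le> x" "x \<le> t"
  then have "0 < x" "x < 1" using assms by auto
  have "ln (1 - x) + x < 0"
    using ln_le_minus_one[of "1 - x"] ln_eq_minus_one[of "1 - x"] \<open>0 < x\<close> \<open>x < 1\<close> by fastforce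
  moreover have "((\<lambda>x. \<eta> (1 - x) / x) has_real_derivative (ln (1 - x) + x) / x\<^sup>2) (at x)"
    using \<open>0 < x\<close> \<open>x < 1\<close> unfolding \<eta>_def
    by (auto intro!: derivative_eq_intros simp: field_simps power2_eq_square)
  ultimately show "\<exists>d. ((\<lambda>x. \<eta> (1 - x) / x) has_real_derivative d) (at x) \<and> d < 0"
    using \<open>0 < x\<close> by (intro exI[of _ "(ln (1 - x) + x) / x\<^sup>2"] conjI) (auto simp: divide_neg_pos)
qed

lemma eta_one_minus_div_strict_antimono:
  assumes "0 < \<nu>1" "0 < t1" "t1 < t2" "t2 < 1" "t2 * \<nu>1 \<le> t1 * \<nu>2"
  shows "\<eta> (1 - t2) / \<nu>2 < \<eta> (1 - t1) / \<nu>1"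
proof -
  have "0 < t2 * \<nu>1" using assms by simp
  then have "0 < t1 * \<nu>2" using assms by linarith
  then have "0 < \<nu>2" using assms by (simp add: zero_less_mult_iff)
  have "\<eta> (1 - t2) / \<nu>2 = t2 / \<nu>2 * (\<eta> (1 - t2) / t2)"
    using assms by (simp add: field_simps)
  also have "\<dots> \<le> t1 / \<nu>1 * (\<eta> (1 - t2) / t2)"
    using assms \<open>0 < \<nu>2\<close> eta_pos[of "1 - t2"]
    by (intro mult_right_mono) (simp_all add: field_simps)
  also have "\<dots> < t1 / \<nu>1 * (\<eta> (1 - t1) / t1)"
    using assms eta_one_minus_div_self_strict_antimono[of t1 t2] by (intro mult_strict_left_mono) auto
  also have "\<dots> = \<eta> (1 - t1) / \<nu>1"
    using assms by (simp add: field_simps)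
  finally show ?thesis .
qed

lemma mult_inverse_min: "0 < c \<Longrightarrow> c * inverse (min a b) = inverse (min (a / c) (b / c))"
  for a b c :: real
proof -
  assume "0 < c"
  then have "min (a / c) (b / c) = min a b / c" by (simp add: min_divide_distrib_right)
  then show ?thesis by (simp add: divide_inverse mult.commute)
qed

lemma inverse_min_strict_antimono:
  fixes a b a' b' :: real
  assumes "0 < a'" "0 < b'" "a' < a" "b' < b"
  shows "inverse (min a b) < inverse (min a' b')"
  using assms by (intro less_imp_inverse_less) (auto simp: min_def)

lemma beta_eq: "beta p \<nu> = 1 - (1 - p) * \<nu>"
  by (simp add: beta_def algebra_simps)

lemma beta_bounds:
  assumes "0 < p" "p < 1" "0 < \<nu>" "\<nu> \<le> 1"
  shows "0 < beta p \<nu>" "beta p \<nu> < 1"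
proof -
  have "0 < (1 - p) * \<nu>" "(1 - p) * \<nu> \<le> 1 - p"
    using assms by (simp_all add: mult_left_le)
  with \<open>0 < p\<close> show "0 < beta p \<nu>" "beta p \<nu> < 1"
    unfolding beta_eq by linarith+
qed

lemma exp_minus_one_le_beta_exp_minus_one: "\<nu> \<le> 1 \<Longrightarrow> exp (-1) \<le> beta (exp (-1)) \<nu>"
proof -
  assume "\<nu> \<le> 1"
  then have "(1 - exp (-1)) * \<nu> \<le> 1 - exp (-1)"
    using exp_minus_one_bounds by (intro mult_left_le) auto
  then show ?thesis unfolding beta_eq by linarith
qed

lemma p_star_exists:
  assumes "0 < \<nu>" "\<nu> \<le> 1"
  obtains p where "0 < p" "p \<le> exp (-1)" "exp (-1) \<le> beta p \<nu>" "\<eta> p = \<eta> (beta p \<nu>)"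
proof -
  \<comment> \<open>Clamping \<open>\<beta>\<^sub>p\<close> at \<open>1/e\<close> keeps \<open>G 0 < 0\<close> also for \<open>\<nu> = 1\<close> and rules out zeros with \<open>\<beta>\<^sub>p < 1/e\<close>.\<close>
  define m where "m p = max (beta p \<nu>) (exp (-1))" for p
  define G where "G p = \<eta> p - \<eta> (m p)" for p
  have m_pos: "0 < m p" for p
    unfolding m_def by (simp add: max.strict_coboundedI2)
  have "0 < \<eta> (m 0)"
    using assms exp_minus_one_bounds by (intro eta_pos) (auto simp: m_def beta_eq)
  then have "G 0 < 0"
    by (simp add: G_def \<eta>_def)
  moreover have "0 \<le> G (exp (-1))"
    using eta_le_exp_minus_one[OF m_pos] by (simp add: G_def)
  moreover have "continuous_on {0..exp (-1)} G"
    unfolding G_def m_def beta_def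
    by (intro continuous_intros continuous_on_compose2[OF continuous_on_eta])
      (auto simp: le_max_iff_disj)
  ultimately obtain p where p: "0 \<le> p" "p \<le> exp (-1)" "G p = 0"
    using IVT'[of G 0 0 "exp (-1)"] by auto
  with \<open>G 0 < 0\<close> have "0 < p"
    by (cases "p = 0") auto
  have "exp (-1) \<le> beta p \<nu>"
  proof (rule ccontr)
    assume "\<not> exp (-1) \<le> beta p \<nu>"
    then have "p \<noteq> exp (-1)" and "\<eta> p = \<eta> (exp (-1))"
      using p assms exp_minus_one_le_beta_exp_minus_one by (auto simp: G_def m_def)
    then show False
      using eta_strict_mono[of p "exp (-1)"] p \<open>0 < p\<close> by simp
  qed
  then show thesis
    using p \<open>0 < p\<close> by (intro that) (auto simp: G_def m_def max_def)
qed

lemma p_star_spec: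
  assumes "0 < \<nu>" "\<nu> \<le> 1"
  shows "0 < p_star \<nu>" "p_star \<nu> \<le> exp (-1)" "exp (-1) \<le> beta (p_star \<nu>) \<nu>"
    "\<eta> (p_star \<nu>) = \<eta> (beta (p_star \<nu>) \<nu>)"
proof -
  obtain p where p: "0 < p" "p \<le> exp (-1)" "exp (-1) \<le> beta p \<nu>" "\<eta> p = \<eta> (beta p \<nu>)"
    using p_star_exists[OF assms] .
  have "p_star \<nu> = p"
    unfolding p_star_def
  proof (rule Least_equality)
    show "0 < p \<and> exp (-1) \<le> beta p \<nu> \<and> p * ln p = beta p \<nu> * ln (beta p \<nu>)"
      using p by (simp add: \<eta>_def)
  next
    fix q assume q: "0 < q \<and> exp (-1) \<le> beta q \<nu> \<and> q * ln q = beta q \<nu> * ln (beta q \<nu>)"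
    show "p \<le> q"
    proof (rule ccontr)
      assume "\<not> p \<le> q"
      then have "\<eta> q < \<eta> p"
        using q p by (intro eta_strict_mono) auto
      moreover have "\<eta> (beta p \<nu>) < \<eta> (beta q \<nu>)"
        using eta_strict_antimono q \<open>\<not> p \<le> q\<close> assms by (simp add: beta_def)
      ultimately show False
        using p q by (simp add: \<eta>_def)
    qed
  qed
  with p show "0 < p_star \<nu>" "p_star \<nu> \<le> exp (-1)" "exp (-1) \<le> beta (p_star \<nu>) \<nu>"
    "\<eta> (p_star \<nu>) = \<eta> (beta (p_star \<nu>) \<nu>)"
    by simp_all
qed

lemma h_star_eq: "0 < \<nu> \<Longrightarrow> \<nu> \<le> 1 \<Longrightarrow> h_star \<nu> = inverse (\<eta> (p_star \<nu>))"
  by (simp add: h_star_def h_eq p_star_spec)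

lemma h_star_le_h:
  assumes "0 < \<nu>" "\<nu> \<le> 1" "0 < p" "p < 1"
  shows "h_star \<nu> \<le> h p \<nu>"
proof -
  note P = p_star_spec[OF assms(1,2)]
  have "min (\<eta> (beta p \<nu>)) (\<eta> p) \<le> \<eta> (p_star \<nu>)"
  proof (cases "p \<le> p_star \<nu>")
    case True
    then show ?thesis
      using eta_strict_mono[of p "p_star \<nu>"] P assms by (cases "p = p_star \<nu>") auto
  next
    case False
    then have "beta (p_star \<nu>) \<nu> < beta p \<nu>"
      using assms by (simp add: beta_def)
    then show ?thesis
      using eta_strict_antimono P by fastforce
  qed
  moreover have "0 < min (\<eta> (beta p \<nu>)) (\<eta> p)"
    using assms beta_bounds by (simp add: eta_pos)
  ultimately show ?thesis
    using assms by (simp add: h_star_eq h_eq le_imp_inverse_le)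
qed

lemma p_star_strict_mono:
  assumes "0 < \<nu>1" "\<nu>1 < \<nu>2" "\<nu>2 \<le> 1"
  shows "p_star \<nu>1 < p_star \<nu>2"
proof (rule ccontr)
  assume "\<not> p_star \<nu>1 < p_star \<nu>2"
  note P1 = p_star_spec[of \<nu>1] and P2 = p_star_spec[of \<nu>2]
  have "(1 - p_star \<nu>1) * \<nu>1 < (1 - p_star \<nu>1) * \<nu>2"
    using assms P1 exp_minus_one_bounds by (intro mult_strict_left_mono) auto
  also have "\<dots> \<le> (1 - p_star \<nu>2) * \<nu>2"
    using assms \<open>\<not> p_star \<nu>1 < p_star \<nu>2\<close> by (intro mult_right_mono) auto
  finally have "\<eta> (beta (p_star \<nu>1) \<nu>1) < \<eta> (beta (p_star \<nu>2) \<nu>2)"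
    using assms P2 by (intro eta_strict_antimono) (auto simp: beta_eq)
  moreover have "\<eta> (p_star \<nu>2) \<le> \<eta> (p_star \<nu>1)"
    using eta_strict_mono[of "p_star \<nu>2" "p_star \<nu>1"] \<open>\<not> p_star \<nu>1 < p_star \<nu>2\<close> assms P1 P2
    by (cases "p_star \<nu>1 = p_star \<nu>2") auto
  ultimately show False
    using assms P1 P2 by simp
qed

lemma h_star_strict_antimono:
  assumes "0 < \<nu>1" "\<nu>1 < \<nu>2" "\<nu>2 \<le> 1"
  shows "h_star \<nu>2 < h_star \<nu>1"
proof -
  note P1 = p_star_spec[of \<nu>1] and P2 = p_star_spec[of \<nu>2]
  have "\<eta> (p_star \<nu>1) < \<eta> (p_star \<nu>2)"
    using assms P1 P2 p_star_strict_mono by (intro eta_strict_mono) auto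
  moreover have "0 < \<eta> (p_star \<nu>1)"
    using assms P1 exp_minus_one_bounds by (intro eta_pos) auto
  ultimately show ?thesis
    using assms by (simp add: h_star_eq less_imp_inverse_less)
qed

lemma mult_h_strict_mono:
  assumes "0 < p" "p < 1" "0 < \<nu>1" "\<nu>1 < \<nu>2" "\<nu>2 \<le> 1"
  shows "\<nu>1 * h p \<nu>1 < \<nu>2 * h p \<nu>2"
proof -
  have "(1 - p) * \<nu>2 < 1"
    using assms beta_bounds[of p \<nu>2] by (simp add: beta_eq)
  then have "\<eta> (beta p \<nu>2) / \<nu>2 < \<eta> (beta p \<nu>1) / \<nu>1"
    using assms eta_one_minus_div_strict_antimono[of \<nu>1 "(1 - p) * \<nu>1" "(1 - p) * \<nu>2" \<nu>2]
    by (simp add: beta_eq)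
  moreover have "\<eta> p / \<nu>2 < \<eta> p / \<nu>1"
    using assms eta_pos by (intro divide_strict_left_mono) auto
  moreover have "0 < \<eta> (beta p \<nu>2) / \<nu>2" "0 < \<eta> p / \<nu>2"
    using assms beta_bounds[of p \<nu>2] eta_pos by auto
  ultimately show ?thesis
    using assms inverse_min_strict_antimono by (simp add: h_eq mult_inverse_min)
qed

lemma mult_h_star_strict_mono:
  assumes "0 < \<nu>1" "\<nu>1 < \<nu>2" "\<nu>2 \<le> 1"
  shows "\<nu>1 * h_star \<nu>1 < \<nu>2 * h_star \<nu>2"
proof -
  have p: "0 < p_star \<nu>2" "p_star \<nu>2 < 1"
    using assms p_star_spec[of \<nu>2] exp_minus_one_bounds by auto
  have "\<nu>1 * h_star \<nu>1 \<le> \<nu>1 * h (p_star \<nu>2) \<nu>1"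
    using assms p h_star_le_h by (intro mult_left_mono) auto
  also have "\<dots> < \<nu>2 * h (p_star \<nu>2) \<nu>2"
    using assms p by (intro mult_h_strict_mono)
  finally show ?thesis
    by (simp add: h_star_def)
qed

lemma beta_exp_minus_one_mult: "beta (exp (-1) * \<nu>) \<nu> = 1 - \<nu> + exp (-1) * \<nu>\<^sup>2"
  by (simp add: beta_def power2_eq_square algebra_simps)

lemma beta_exp_minus_one_mult_bounds:
  assumes "0 < \<nu>" "\<nu> \<le> 1"
  shows "exp (-1) \<le> beta (exp (-1) * \<nu>) \<nu>" "beta (exp (-1) * \<nu>) \<nu> < 1"
proof -
  have "beta (exp (-1) * \<nu>) \<nu> - exp (-1) = (1 - \<nu>) * (1 - (1 + \<nu>) * exp (-1))"
    by (simp add: beta_def algebra_simps)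
  moreover have "(1 + \<nu>) * exp (-1) \<le> 2 * exp (-1)"
    using assms by (intro mult_right_mono) auto
  then have "(1 + \<nu>) * exp (-1) < 1"
    using exp_minus_one_bounds by linarith
  then have "0 \<le> (1 - \<nu>) * (1 - (1 + \<nu>) * exp (-1))"
    using assms by (intro mult_nonneg_nonneg) auto
  ultimately show "exp (-1) \<le> beta (exp (-1) * \<nu>) \<nu>"
    by linarith
  show "beta (exp (-1) * \<nu>) \<nu> < 1"
    using assms exp_minus_one_mult_less_one[of \<nu>] by (simp add: beta_eq)
qed

lemma beta_exp_minus_one_mult_strict_antimono:
  assumes "0 < \<nu>1" "\<nu>1 < \<nu>2" "\<nu>2 \<le> 1"
  shows "beta (exp (-1) * \<nu>2) \<nu>2 < beta (exp (-1) * \<nu>1) \<nu>1"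
proof -
  have "exp (-1) * (\<nu>1 + \<nu>2) \<le> exp (-1) * 2"
    using assms by (intro mult_left_mono) auto
  then have "exp (-1) * (\<nu>1 + \<nu>2) < 1"
    using exp_minus_one_bounds by linarith
  then have "0 < (\<nu>2 - \<nu>1) * (1 - exp (-1) * (\<nu>1 + \<nu>2))"
    using assms by (intro mult_pos_pos) auto
  then show ?thesis
    by (simp add: beta_def algebra_simps)
qed

lemma mult_h_exp_minus_one_mult_strict_mono:
  assumes "0 < \<nu>1" "\<nu>1 < \<nu>2" "\<nu>2 \<le> 1"
  shows "\<nu>1 * h (exp (-1) * \<nu>1) \<nu>1 < \<nu>2 * h (exp (-1) * \<nu>2) \<nu>2"
proof -
  define t :: "real \<Rightarrow> real" where "t \<nu> = \<nu> * (1 - exp (-1) * \<nu>)" for \<nu>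
  have beta_t: "beta (exp (-1) * \<nu>) \<nu> = 1 - t \<nu>" for \<nu>
    by (simp add: beta_def t_def algebra_simps)
  have "t \<nu>1 < t \<nu>2"
    using beta_exp_minus_one_mult_strict_antimono[OF assms] by (simp add: beta_t)
  moreover have "0 < t \<nu>1" "t \<nu>2 < 1"
    using assms beta_exp_minus_one_mult_bounds[of \<nu>1] beta_exp_minus_one_mult_bounds[of \<nu>2]
      exp_minus_one_bounds by (simp_all add: beta_t)
  moreover have "t \<nu>2 * \<nu>1 \<le> t \<nu>1 * \<nu>2"
    using assms by (simp add: t_def algebra_simps)
  ultimately have "\<eta> (beta (exp (-1) * \<nu>2) \<nu>2) / \<nu>2 < \<eta> (beta (exp (-1) * \<nu>1) \<nu>1) / \<nu>1"
    using assms unfolding beta_t by (intro eta_one_minus_div_strict_antimono) auto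
  moreover have "\<eta> (exp (-1) * \<nu>2) / \<nu>2 < \<eta> (exp (-1) * \<nu>1) / \<nu>1"
    using assms by (simp add: eta_exp_minus_one_mult)
  moreover have "0 < \<eta> (beta (exp (-1) * \<nu>2) \<nu>2) / \<nu>2"
    using assms beta_exp_minus_one_mult_bounds[of \<nu>2] exp_minus_one_bounds by (simp add: eta_pos)
  moreover have "0 < \<eta> (exp (-1) * \<nu>2) / \<nu>2"
    using assms eta_exp_minus_one_mult_pos[of \<nu>2] by simp
  ultimately show ?thesis
    using assms inverse_min_strict_antimono by (simp add: h_eq mult_inverse_min)
qed

lemma h_exp_minus_one_mult_strict_antimono:
  assumes "0 < \<nu>1" "\<nu>1 < \<nu>2" "\<nu>2 \<le> 1"
  shows "h (exp (-1) * \<nu>2) \<nu>2 < h (exp (-1) * \<nu>1) \<nu>1"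
proof -
  have "\<eta> (beta (exp (-1) * \<nu>1) \<nu>1) < \<eta> (beta (exp (-1) * \<nu>2) \<nu>2)"
    using assms beta_exp_minus_one_mult_bounds[of \<nu>2] beta_exp_minus_one_mult_strict_antimono
    by (intro eta_strict_antimono) auto
  moreover have "\<eta> (exp (-1) * \<nu>1) < \<eta> (exp (-1) * \<nu>2)"
    using assms by (intro eta_strict_mono) auto
  moreover have "0 < \<eta> (beta (exp (-1) * \<nu>1) \<nu>1)"
    using assms beta_exp_minus_one_mult_bounds[of \<nu>1] exp_minus_one_bounds by (simp add: eta_pos)
  moreover have "0 < \<eta> (exp (-1) * \<nu>1)"
    using assms by (intro eta_exp_minus_one_mult_pos) auto
  ultimately show ?thesis
    using inverse_min_strict_antimono by (simp add: h_eq)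
qed

lemma quadratic_pos:
  fixes \<nu> :: real
  assumes "0 \<le> \<nu>" "\<nu> \<le> 1"
  shows "0 < 1 - \<nu> + exp (-1) * \<nu>\<^sup>2"
proof (cases "\<nu> = 0")
  case False
  then have "exp (-1) \<le> 1 - \<nu> + exp (-1) * \<nu>\<^sup>2"
    using assms beta_exp_minus_one_mult_bounds(1)[of \<nu>] by (simp add: beta_exp_minus_one_mult)
  then show ?thesis
    using exp_gt_zero[of "-1"] by linarith
qed simp

lemma ln_quadratic_le:
  fixes \<nu> :: real
  assumes "0 \<le> \<nu>" "\<nu> \<le> 1"
  shows "ln (1 - \<nu> + exp (-1) * \<nu>\<^sup>2) \<le> - \<nu>"
proof -
  define b where "b x = 1 - x + exp (-1) * x\<^sup>2" for x :: real
  define f where "f x = x + ln (b x)" for x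
  have b_pos: "0 < b x" if "0 \<le> x" "x \<le> 1" for x
    using quadratic_pos[OF that] by (simp add: b_def)
  have f_deriv: "(f has_real_derivative exp (-1) * x * (x - (exp 1 - 2)) / b x) (at x)"
    if "0 \<le> x" "x \<le> 1" for x
  proof -
    have "(f has_real_derivative 1 + (exp (-1) * (2 * x) - 1) / b x) (at x)"
      unfolding f_def b_def using b_pos[OF that]
      by (auto intro!: derivative_eq_intros simp: b_def power2_eq_square)
    moreover have "1 + (exp (-1) * (2 * x) - 1) / b x = exp (-1) * x * (x - (exp 1 - 2)) / b x"
      using b_pos[OF that] exp_minus_one_mult_exp_one
      by (simp add: b_def field_simps power2_eq_square)
    ultimately show ?thesis by simp
  qed
  have "f \<nu> \<le> 0"
  proof (cases "\<nu> \<le> exp 1 - 2")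
    case True
    have "f \<nu> \<le> f 0"
    proof (rule DERIV_nonpos_imp_nonincreasing[OF \<open>0 \<le> \<nu>\<close>])
      fix x assume "0 \<le> x" "x \<le> \<nu>"
      then show "\<exists>y. (f has_real_derivative y) (at x) \<and> y \<le> 0"
        using True assms b_pos[of x] f_deriv[of x]
        by (intro exI[of _ "exp (-1) * x * (x - (exp 1 - 2)) / b x"] conjI)
          (auto simp: mult_nonneg_nonpos divide_nonpos_pos)
    qed
    then show ?thesis by (simp add: f_def b_def)
  next
    case False
    have "f \<nu> \<le> f 1"
    proof (rule DERIV_nonneg_imp_nondecreasing[OF \<open>\<nu> \<le> 1\<close>])
      fix x assume "\<nu> \<le> x" "x \<le> 1"
      then show "\<exists>y. (f has_real_derivative y) (at x) \<and> 0 \<le> y"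
        using False assms b_pos[of x] f_deriv[of x]
        by (intro exI[of _ "exp (-1) * x * (x - (exp 1 - 2)) / b x"] conjI) auto
    qed
    then show ?thesis by (simp add: f_def b_def)
  qed
  then show ?thesis by (simp add: f_def b_def)
qed

lemma quadratic_le_exp_minus_one_mult_one_minus_ln:
  fixes \<nu> :: real
  assumes "0 < \<nu>" "\<nu> \<le> 1"
  shows "1 - \<nu> + exp (-1) * \<nu>\<^sup>2 \<le> exp (-1) * (1 - ln \<nu>)"
proof -
  define \<psi> :: "real \<Rightarrow> real" where "\<psi> x = exp (-1) * (1 - ln x) - (1 - x + exp (-1) * x\<^sup>2)" for x
  have "\<psi> 1 \<le> \<psi> \<nu>"
  proof (rule DERIV_nonpos_imp_nonincreasing[OF \<open>\<nu> \<le> 1\<close>])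
    fix x assume "\<nu> \<le> x" "x \<le> 1"
    then have "0 < x" using assms by simp
    have "(\<psi> has_real_derivative - exp (-1) / x + 1 - exp (-1) * (2 * x)) (at x)"
      unfolding \<psi>_def using \<open>0 < x\<close>
      by (auto intro!: derivative_eq_intros simp: power2_eq_square)
    moreover have "- exp (-1) / x + 1 - exp (-1) * (2 * x) = - (2 * exp (-1) * x\<^sup>2 - x + exp (-1)) / x"
      using \<open>0 < x\<close> by (simp add: field_simps power2_eq_square)
    moreover have "0 < 2 * exp (-1) * x\<^sup>2 - x + exp (-1)"
    proof -
      \<comment> \<open>the discriminant \<open>1 - 8 exp (-2)\<close> is negative\<close>
      have "8 * exp (-1) * (2 * exp (-1) * x\<^sup>2 - x + exp (-1)) = (4 * exp (-1) * x - 1)\<^sup>2 + (8 * (exp (-1))\<^sup>2 - 1)"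
        by (simp add: algebra_simps power2_eq_square)
      moreover have "9/25 * (9/25) < exp (-1) * exp (-1::real)"
        using exp_minus_one_bounds by (intro mult_strict_mono) auto
      then have "1 < 8 * (exp (-1::real))\<^sup>2"
        by (simp add: power2_eq_square)
      ultimately have "0 < 8 * exp (-1) * (2 * exp (-1) * x\<^sup>2 - x + exp (-1))"
        using zero_le_power2[of "4 * exp (-1) * x - 1"] by linarith
      then show ?thesis by (simp add: zero_less_mult_iff)
    qed
    ultimately show "\<exists>y. (\<psi> has_real_derivative y) (at x) \<and> y \<le> 0"
      using \<open>0 < x\<close> by (intro exI conjI) (auto simp: divide_nonpos_pos)
  qed
  then show ?thesis by (simp add: \<psi>_def)
qed

lemma inverse_quadratic_le:
  fixes \<nu> :: real
  assumes "0 \<le> \<nu>" "\<nu> \<le> 1"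
  shows "inverse (1 - \<nu> + exp (-1) * \<nu>\<^sup>2) \<le> 1 + (exp 1 - 1) * \<nu>"
proof -
  have "(1 - exp (-1)) * \<nu> \<le> 1 - exp (-1)"
    using assms exp_minus_one_bounds by (intro mult_left_le) auto
  then have "0 \<le> (exp 1 - 2) - (1 - exp (-1)) * \<nu>"
    using exp_one_gt_27 exp_minus_one_bounds by linarith
  then have "0 \<le> \<nu> * (1 - \<nu>) * ((exp 1 - 2) - (1 - exp (-1)) * \<nu>)"
    using assms by simp
  moreover have "(1 - \<nu> + exp (-1) * \<nu>\<^sup>2) * (1 + (exp 1 - 1) * \<nu>)
      = 1 + \<nu> * (1 - \<nu>) * ((exp 1 - 2) - (1 - exp (-1)) * \<nu>)"
    using exp_minus_one_mult_exp_one
    by (simp add: algebra_simps power2_eq_square power3_eq_cube)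
  moreover have "0 < 1 - \<nu> + exp (-1) * \<nu>\<^sup>2"
    using assms by (rule quadratic_pos)
  ultimately show ?thesis
    by (simp add: inverse_eq_divide divide_le_eq mult.commute)
qed

lemma mult_h_exp_minus_one_mult_le:
  assumes "0 < \<nu>" "\<nu> \<le> 1"
  shows "\<nu> * h (exp (-1) * \<nu>) \<nu> \<le> inverse (1 - \<nu> + exp (-1) * \<nu>\<^sup>2)"
proof -
  define b where "b = beta (exp (-1) * \<nu>) \<nu>"
  have b: "exp (-1) \<le> b" "b < 1" "b = 1 - \<nu> + exp (-1) * \<nu>\<^sup>2"
    using beta_exp_minus_one_mult_bounds[OF assms] by (simp_all add: b_def beta_exp_minus_one_mult)
  then have "0 < b"
    using exp_gt_zero[of "-1"] by linarith
  have "b * \<nu> \<le> b * - ln b"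
    using ln_quadratic_le[of \<nu>] assms b \<open>0 < b\<close> by (intro mult_left_mono) auto
  then have "b \<le> \<eta> b / \<nu>"
    using assms by (simp add: \<eta>_def field_simps)
  moreover have "b \<le> \<eta> (exp (-1) * \<nu>) / \<nu>"
    using quadratic_le_exp_minus_one_mult_one_minus_ln[OF assms] assms b
    by (simp add: eta_exp_minus_one_mult)
  ultimately have "inverse (min (\<eta> b / \<nu>) (\<eta> (exp (-1) * \<nu>) / \<nu>)) \<le> inverse b"
    using \<open>0 < b\<close> by (intro le_imp_inverse_le) auto
  then show ?thesis
    using assms by (simp add: h_eq mult_inverse_min b_def flip: b(3))
qed

theorem lemma12:
  shows "(\<forall>\<nu>1 \<nu>2. 0 < \<nu>1 \<longrightarrow> \<nu>1 < \<nu>2 \<longrightarrow> \<nu>2 \<le> 1 \<longrightarrow>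
            p_star \<nu>1 < p_star \<nu>2
          \<and> \<nu>1 * h_star \<nu>1 < \<nu>2 * h_star \<nu>2
          \<and> \<nu>1 * h (exp (-1) * \<nu>1) \<nu>1 < \<nu>2 * h (exp (-1) * \<nu>2) \<nu>2
          \<and> h_star \<nu>1 > h_star \<nu>2
          \<and> h (exp (-1) * \<nu>1) \<nu>1 > h (exp (-1) * \<nu>2) \<nu>2)
       \<and> (\<forall>\<nu>. 0 < \<nu> \<longrightarrow> \<nu> \<le> 1 \<longrightarrow>
            \<nu> * h_star \<nu> \<le> \<nu> * h (exp (-1) * \<nu>) \<nu>
          \<and> \<nu> * h (exp (-1) * \<nu>) \<nu> \<le> inverse (1 - \<nu> + exp (-1) * \<nu>^2)
          \<and> inverse (1 - \<nu> + exp (-1) * \<nu>^2) \<le> 1 + (exp 1 - 1) * \<nu>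
          \<and> 1 + (exp 1 - 1) * \<nu> \<le> exp 1)"
proof (intro conjI allI impI)
  fix \<nu>1 \<nu>2 :: real
  assume "0 < \<nu>1" "\<nu>1 < \<nu>2" "\<nu>2 \<le> 1"
  then show "p_star \<nu>1 < p_star \<nu>2"
    and "\<nu>1 * h_star \<nu>1 < \<nu>2 * h_star \<nu>2"
    and "\<nu>1 * h (exp (-1) * \<nu>1) \<nu>1 < \<nu>2 * h (exp (-1) * \<nu>2) \<nu>2"
    and "h_star \<nu>1 > h_star \<nu>2"
    and "h (exp (-1) * \<nu>1) \<nu>1 > h (exp (-1) * \<nu>2) \<nu>2"
    by (simp_all add: p_star_strict_mono mult_h_star_strict_mono
        mult_h_exp_minus_one_mult_strict_mono h_star_strict_antimono
        h_exp_minus_one_mult_strict_antimono)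
next
  fix \<nu> :: real
  assume \<nu>: "0 < \<nu>" "\<nu> \<le> 1"
  then have "0 < exp (-1) * \<nu>" "exp (-1) * \<nu> < 1"
    by (simp_all add: exp_minus_one_mult_less_one)
  then show "\<nu> * h_star \<nu> \<le> \<nu> * h (exp (-1) * \<nu>) \<nu>"
    using \<nu> h_star_le_h by (simp add: mult_left_mono)
  show "\<nu> * h (exp (-1) * \<nu>) \<nu> \<le> inverse (1 - \<nu> + exp (-1) * \<nu>^2)"
    using \<nu> by (rule mult_h_exp_minus_one_mult_le)
  show "inverse (1 - \<nu> + exp (-1) * \<nu>^2) \<le> 1 + (exp 1 - 1) * \<nu>"
    using \<nu> by (intro inverse_quadratic_le) auto
  have "(exp 1 - 1) * \<nu> \<le> exp 1 - 1"
    by (rule mult_left_le) (use \<nu> in auto)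
  then show "1 + (exp 1 - 1) * \<nu> \<le> exp 1"
    by linarith
qed

end
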